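(* Let $\nu\in\mathbb{N}$ and $0<x\le1$. Then $1\le D_{\nu,x}<\infty$.
   Context: $|\cdot|$ is the maximum norm on $\mathbb{Z}^\nu$. $D_{\nu,x}:=\sup_{n\in\mathbb{Z}^\nu,\sigma\ge1/4}\sum_{m\in\mathbb{Z}^\nu}\frac{e^{\sigma|n|^x}}{e^{\sigma|m|^x}e^{\sigma|n-m|^x}}$ if $0<x<1$, and $D_{\nu,1}:=\sup_{n\in\mathbb{Z}^\nu,\sigma\ge1/4}\sum_{m\in\mathbb{Z}^\nu}\frac{(1+|n|)^{\nu+1}e^{\sigma|n|}}{(1+|m|)^{\nu+1}e^{\sigma|m|}(1+|n-m|)^{\nu+1}e^{\sigma|n-m|}}$. *)

theory Defs
  imports "HOL-Analysis.Analysis"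
begin

text \<open>The lattice Z^nu, represented as integer sequences vanishing outside the
  index range {0..<nu}.\<close>
definition lattice :: "nat \<Rightarrow> (nat \<Rightarrow> int) set" where
  "lattice \<nu> = {n. \<forall>i\<ge>\<nu>. n i = 0}"

definition mnorm :: "nat \<Rightarrow> (nat \<Rightarrow> int) \<Rightarrow> real" where
  "mnorm \<nu> n = Max (insert 0 ((\<lambda>i. real_of_int \<bar>n i\<bar>) ` {..<\<nu>}))"

definition wt :: "nat \<Rightarrow> real \<Rightarrow> real \<Rightarrow> (nat \<Rightarrow> int) \<Rightarrow> real" where
  "wt \<nu> x \<sigma> n =
     (if x < 1 then exp (\<sigma> * (mnorm \<nu> n) powr x)
      else (1 + mnorm \<nu> n) ^ (\<nu> + 1) * exp (\<sigma> * mnorm \<nu> n))"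

definition Dconst :: "nat \<Rightarrow> real \<Rightarrow> ennreal" where
  "Dconst \<nu> x = (SUP n \<in> lattice \<nu>. SUP \<sigma> \<in> {1/4..}.
      infsum (\<lambda>m. ennreal (wt \<nu> x \<sigma> n / (wt \<nu> x \<sigma> m * wt \<nu> x \<sigma> (\<lambda>i. n i - m i))))
             (lattice \<nu>))"

end

theory Submission
  imports Defs
begin

(* Write u = |m|, v = |n - m|, w = |n|, so w <= u + v.  For x < 1, concavity of t |-> t^x gives
  (u + v)^x <= max(u,v)^x + x min(u,v)^x, so for sigma >= 1/4 the weight ratio
  exp(sigma (w^x - u^x - v^x)) is at most exp(-(1 - x)/4 min(u,v)^x), which beats every
  polynomial; for x = 1 the exponentials cancel and 1 + w <= 2 (1 + max(u,v)).  Either way the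
  summand is O((1 + min(u,v))^-(nu+1)) uniformly in n and sigma, which is at most
  O((1 + |m|)^-(nu+1) + (1 + |n - m|)^-(nu+1)).  Bounding (1 + |m|)^-(nu+1) by the product of the
  (1 + |m_i|)^-(nu+1)/nu makes the lattice sum factor into convergent one-dimensional sums.
  The lower bound is the term n = m = 0. *)

lemma infsum_cmult_right_le_ennreal:
  fixes f :: "'a \<Rightarrow> ennreal"
  shows "(\<Sum>\<^sub>\<infinity>a\<in>A. c * f a) \<le> c * (\<Sum>\<^sub>\<infinity>a\<in>A. f a)"
proof (rule infsum_le_finite_sums)
  fix F assume "finite F" "F \<subseteq> A"
  then have "sum f F \<le> infsum f A"
    unfolding nonneg_infsum_complete[of A f, OF zero_le] by (intro SUP_upper) auto
  then show "(\<Sum>a\<in>F. c * f a) \<le> c * infsum f A"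
    by (simp add: mult_left_mono flip: sum_distrib_left)
qed (rule nonneg_summable_on_complete, simp)

lemma one_plus_pow_le_exp_powr:
  fixes c x :: real and N :: nat
  assumes c: "0 < c" and x: "0 < x"
  obtains B where "\<And>t. 0 \<le> t \<Longrightarrow> (1 + t) ^ N \<le> B * exp (c * t powr x)"
proof -
  define k where "k = nat \<lceil>N / x\<rceil> + 1"
  have "N / x \<le> k" unfolding k_def by linarith
  then have k: "0 < k" "N \<le> k * x" using x by (auto simp: k_def field_simps)
  define B where "B = 2 ^ N * max 1 ((k / c) ^ k)"
  have B: "1 \<le> B"
    unfolding B_def using mult_mono[of 1 "2 ^ N" 1 "max 1 ((k / c) ^ k)"] by simp
  show thesis
  proof (rule that)
    fix t :: real assume t: "0 \<le> t"
    have exp_ge: "1 \<le> exp (c * t powr x)" using c t by simp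
    show "(1 + t) ^ N \<le> B * exp (c * t powr x)"
    proof (cases "t \<le> 1")
      case True
      have "(1 + t) ^ N \<le> 2 ^ N" using t True by (intro power_mono) auto
      also have "\<dots> \<le> B" by (simp add: B_def)
      also have "\<dots> \<le> B * exp (c * t powr x)" using B exp_ge by simp
      finally show ?thesis .
    next
      case False
      have "(1 + t) ^ N \<le> (2 * t) ^ N" using False by (intro power_mono) auto
      also have "\<dots> = 2 ^ N * t powr N" using False by (simp add: power_mult_distrib powr_realpow)
      also have "t powr N \<le> t powr (k * x)" using False k by (intro powr_mono) auto
      also have "\<dots> = (t powr x) ^ k"
        using False by (simp add: powr_powr [symmetric] powr_realpow [symmetric] mult.commute)
      also have "\<dots> = (k / c) ^ k * (c * t powr x / k) ^ k"
        using c k by (simp flip: power_mult_distrib)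
      also have "(c * t powr x / k) ^ k \<le> exp (c * t powr x / k) ^ k"
        using c t by (intro power_mono) (auto intro: order_trans[OF _ exp_ge_add_one_self])
      also have "\<dots> = exp (c * t powr x)"
        using k by (simp flip: exp_of_nat_mult)
      also have "2 ^ N * ((k / c) ^ k * exp (c * t powr x)) \<le> B * exp (c * t powr x)"
        by (simp add: B_def)
      finally show ?thesis using c by (simp add: mult_left_mono)
    qed
  qed
qed

lemma powr_add_le:
  fixes x u v :: real
  assumes x: "0 < x" "x < 1" and uv: "0 \<le> u" "u \<le> v"
  shows "(u + v) powr x \<le> v powr x + x * u powr x"
proof (cases "u = 0")
  case False
  with uv have u: "0 < u" and v: "0 < v" by auto
  have "(u + v) powr x * v powr (1 - x) \<le> x * (u + v) + (1 - x) * v"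
    using Youngs_inequality_0[of x "1 - x" "u + v" v] x u v by simp
  then have "(u + v) powr x \<le> (x * (u + v) + (1 - x) * v) / v powr (1 - x)"
    using v by (simp add: field_simps)
  also have "\<dots> = v powr x + x * u * v powr (x - 1)"
    using v by (simp add: field_simps powr_diff powr_add)
  also have "x * u * v powr (x - 1) \<le> x * u * u powr (x - 1)"
    using x u uv by (intro mult_left_mono powr_mono2') auto
  also have "x * u * u powr (x - 1) = x * u powr x"
    using u by (simp add: powr_diff)
  finally show ?thesis by simp
qed simp

lemma powr_triangle_defect_le:
  fixes x \<sigma> u v w :: real
  assumes x: "0 < x" "x < 1" and \<sigma>: "1/4 \<le> \<sigma>"
    and uvw: "0 \<le> u" "0 \<le> v" "0 \<le> w" "w \<le> u + v"
  shows "\<sigma> * (w powr x - u powr x - v powr x) \<le> - ((1 - x) / 4 * min u v powr x)"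
proof -
  have ordered: "\<sigma> * (w powr x - a powr x - b powr x) \<le> - ((1 - x) / 4 * a powr x)"
    if ab: "0 \<le> a" "a \<le> b" "w \<le> a + b" for a b
  proof -
    define d where "d = w powr x - a powr x - b powr x"
    have "w powr x \<le> (a + b) powr x" using ab uvw x by (intro powr_mono2) auto
    also have "\<dots> \<le> b powr x + x * a powr x" using powr_add_le[OF x ab(1,2)] .
    finally have gap: "d \<le> - ((1 - x) * a powr x)"
      by (simp add: d_def algebra_simps)
    moreover have "0 \<le> (1 - x) * a powr x" using x by simp
    ultimately have "(\<sigma> - 1/4) * d \<le> 0"
      using \<sigma> by (intro mult_nonneg_nonpos) auto
    then have "\<sigma> * d \<le> d / 4" by (simp add: algebra_simps)
    with gap show ?thesis unfolding d_def by simp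
  qed
  show ?thesis
  proof (cases "u \<le> v")
    case True
    then show ?thesis using ordered[of u v] uvw by simp
  next
    case False
    then show ?thesis using ordered[of v u] uvw by (simp add: algebra_simps)
  qed
qed

lemma poly_exp_weight_ratio_le:
  fixes \<sigma> u v w :: real and N :: nat
  assumes \<sigma>: "0 \<le> \<sigma>" and uvw: "0 \<le> u" "0 \<le> v" "0 \<le> w" "w \<le> u + v"
  shows "(1 + w) ^ N * exp (\<sigma> * w) / ((1 + u) ^ N * exp (\<sigma> * u) * ((1 + v) ^ N * exp (\<sigma> * v)))
    \<le> 2 ^ N / (1 + min u v) ^ N"
proof -
  have "(1 + w) * (1 + min u v) \<le> 2 * ((1 + u) * (1 + v))"
    using uvw by (cases "u \<le> v") (auto simp: min_def intro: mult_mono)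
  then have "((1 + w) * (1 + min u v)) ^ N \<le> (2 * ((1 + u) * (1 + v))) ^ N"
    using uvw by (intro power_mono) auto
  then have poly: "(1 + w) ^ N * (1 + min u v) ^ N \<le> 2 ^ N * ((1 + u) ^ N * (1 + v) ^ N)"
    by (simp add: power_mult_distrib)
  have exp: "exp (\<sigma> * w) \<le> exp (\<sigma> * u) * exp (\<sigma> * v)"
    using \<sigma> uvw by (simp add: mult_left_mono flip: exp_add distrib_left)
  show ?thesis
    using mult_mono[OF poly exp] uvw by (simp add: divide_simps mult_ac)
qed

lemma inverse_pow_min_le:
  fixes u v :: real
  assumes "0 \<le> u" "0 \<le> v"
  shows "1 / (1 + min u v) ^ N \<le> 1 / (1 + u) ^ N + 1 / (1 + v) ^ N"
  using assms by (cases "u \<le> v") (simp_all add: min_def)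

lemma mnorm_nonneg: "0 \<le> mnorm \<nu> m"
  unfolding mnorm_def by (simp add: Max_ge_iff)

lemma abs_le_mnorm: "i < \<nu> \<Longrightarrow> \<bar>m i\<bar> \<le> mnorm \<nu> m"
  unfolding mnorm_def by (simp add: Max_ge_iff)

lemma mnorm_zero [simp]: "mnorm \<nu> (\<lambda>i. 0) = 0"
  unfolding mnorm_def by (auto intro!: Max_eqI)

lemma mnorm_triangle: "mnorm \<nu> n \<le> mnorm \<nu> m + mnorm \<nu> (\<lambda>i. n i - m i)"
proof -
  have "\<bar>n i\<bar> \<le> mnorm \<nu> m + mnorm \<nu> (\<lambda>i. n i - m i)" if "i < \<nu>" for i
    using abs_le_mnorm[OF that, of m] abs_le_mnorm[OF that, of "\<lambda>i. n i - m i"] by simp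
  then show ?thesis
    using mnorm_nonneg[of \<nu> m] mnorm_nonneg[of \<nu> "\<lambda>i. n i - m i"]
    unfolding mnorm_def[of _ n] by (auto simp: Max_le_iff)
qed

lemma wt_zero [simp]: "wt \<nu> x \<sigma> (\<lambda>i. 0) = 1"
  by (simp add: wt_def)

lemma wt_ratio_le:
  fixes \<nu> :: nat and x :: real
  assumes x: "0 < x" "x \<le> 1"
  obtains C where "0 \<le> C"
    "\<And>\<sigma> n m. 1/4 \<le> \<sigma> \<Longrightarrow> wt \<nu> x \<sigma> n / (wt \<nu> x \<sigma> m * wt \<nu> x \<sigma> (\<lambda>i. n i - m i))
      \<le> C / (1 + min (mnorm \<nu> m) (mnorm \<nu> (\<lambda>i. n i - m i))) ^ (\<nu> + 1)"
proof (cases "x < 1")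
  case True
  obtain B where B: "\<And>t. 0 \<le> t \<Longrightarrow> (1 + t) ^ (\<nu> + 1) \<le> B * exp ((1 - x) / 4 * t powr x)"
    using one_plus_pow_le_exp_powr[of "(1 - x) / 4" x "\<nu> + 1"] True x by auto
  show thesis
  proof (rule that)
    show "0 \<le> B" using B[of 0] by simp
    fix \<sigma> :: real and n m :: "nat \<Rightarrow> int"
    assume \<sigma>: "1/4 \<le> \<sigma>"
    define a where "a = min (mnorm \<nu> m) (mnorm \<nu> (\<lambda>i. n i - m i))"
    have "0 \<le> a" by (simp add: a_def mnorm_nonneg)
    have "wt \<nu> x \<sigma> n / (wt \<nu> x \<sigma> m * wt \<nu> x \<sigma> (\<lambda>i. n i - m i))
      = exp (\<sigma> * (mnorm \<nu> n powr x - mnorm \<nu> m powr x - mnorm \<nu> (\<lambda>i. n i - m i) powr x))"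
      using True by (simp add: wt_def exp_diff right_diff_distrib)
    also have "\<dots> \<le> exp (- ((1 - x) / 4 * a powr x))"
      unfolding a_def using True x \<sigma>
      by (intro exp_mono powr_triangle_defect_le) (simp_all add: mnorm_nonneg mnorm_triangle)
    also have "\<dots> \<le> B / (1 + a) ^ (\<nu> + 1)"
      using B[OF \<open>0 \<le> a\<close>] \<open>0 \<le> a\<close>
      by (simp add: exp_minus inverse_eq_divide le_divide_eq divide_le_eq mult.commute
          del: power_Suc)
    finally show "wt \<nu> x \<sigma> n / (wt \<nu> x \<sigma> m * wt \<nu> x \<sigma> (\<lambda>i. n i - m i)) \<le> B / (1 + a) ^ (\<nu> + 1)" .
  qed
next
  case False
  with x have "x = 1" by simp
  show thesis
  proof (rule that)
    fix \<sigma> :: real and n m :: "nat \<Rightarrow> int"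
    assume "1/4 \<le> \<sigma>"
    then show "wt \<nu> x \<sigma> n / (wt \<nu> x \<sigma> m * wt \<nu> x \<sigma> (\<lambda>i. n i - m i))
      \<le> 2 ^ (\<nu> + 1) / (1 + min (mnorm \<nu> m) (mnorm \<nu> (\<lambda>i. n i - m i))) ^ (\<nu> + 1)"
      unfolding wt_def using \<open>x = 1\<close>
      by (simp only: if_False less_irrefl)
        (intro poly_exp_weight_ratio_le, simp_all add: mnorm_nonneg mnorm_triangle)
  qed simp
qed

definition lattice_box :: "nat \<Rightarrow> int \<Rightarrow> (nat \<Rightarrow> int) set" where
  "lattice_box \<nu> K = {m \<in> lattice \<nu>. \<forall>i<\<nu>. m i \<in> {-K..K}}"

lemma bij_betw_restrict_lattice_box:
  "bij_betw (\<lambda>m. restrict m {..<\<nu>}) (lattice_box \<nu> K) (PiE {..<\<nu>} (\<lambda>_. {-K..K}))"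
proof (rule bij_betw_byWitness[where f' = "\<lambda>g i. if i < \<nu> then g i else 0"])
  show "\<forall>m\<in>lattice_box \<nu> K. (\<lambda>i. if i < \<nu> then restrict m {..<\<nu>} i else 0) = m"
    by (auto simp: lattice_box_def lattice_def fun_eq_iff)
  show "\<forall>g\<in>PiE {..<\<nu>} (\<lambda>_. {-K..K}). restrict (\<lambda>i. if i < \<nu> then g i else 0) {..<\<nu>} = g"
  proof
    fix g assume g: "g \<in> PiE {..<\<nu>} (\<lambda>_. {-K..K})"
    have "restrict (\<lambda>i. if i < \<nu> then g i else 0) {..<\<nu>} = restrict g {..<\<nu>}"
      by (rule restrict_ext) simp
    also have "\<dots> = g" using g by (rule PiE_restrict)
    finally show "restrict (\<lambda>i. if i < \<nu> then g i else 0) {..<\<nu>} = g" .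
  qed
  show "(\<lambda>m. restrict m {..<\<nu>}) ` lattice_box \<nu> K \<subseteq> PiE {..<\<nu>} (\<lambda>_. {-K..K})"
    by (rule image_subsetI) (simp add: lattice_box_def restrict_PiE_iff)
  show "(\<lambda>g i. if i < \<nu> then g i else 0) ` PiE {..<\<nu>} (\<lambda>_. {-K..K}) \<subseteq> lattice_box \<nu> K"
    by (rule image_subsetI) (simp add: lattice_box_def lattice_def PiE_iff)
qed

lemma finite_lattice_box: "finite (lattice_box \<nu> K)"
  using bij_betw_finite[OF bij_betw_restrict_lattice_box] by (simp add: finite_PiE)

lemma sum_lattice_box_prod:
  fixes h :: "int \<Rightarrow> 'a::comm_semiring_1"
  shows "(\<Sum>m\<in>lattice_box \<nu> K. \<Prod>i<\<nu>. h (m i)) = (\<Sum>k\<in>{-K..K}. h k) ^ \<nu>"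
proof -
  have "(\<Sum>m\<in>lattice_box \<nu> K. \<Prod>i<\<nu>. h (m i))
      = (\<Sum>g\<in>PiE {..<\<nu>} (\<lambda>_. {-K..K}). \<Prod>i<\<nu>. h (g i))"
    by (simp flip: sum.reindex_bij_betw[OF bij_betw_restrict_lattice_box])
  also have "\<dots> = (\<Prod>i<\<nu>. \<Sum>k\<in>{-K..K}. h k)"
    by (rule prod_sum_PiE [symmetric]) auto
  finally show ?thesis by simp
qed

lemma infsum_lattice_prod_le:
  fixes h :: "int \<Rightarrow> real"
  assumes h: "\<And>k. 0 \<le> h k" and T: "\<And>K. (\<Sum>k\<in>{-K..K}. h k) \<le> T"
  shows "(\<Sum>\<^sub>\<infinity>m\<in>lattice \<nu>. ennreal (\<Prod>i<\<nu>. h (m i))) \<le> ennreal (T ^ \<nu>)"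
proof (rule infsum_le_finite_sums)
  fix F assume F: "finite F" "F \<subseteq> lattice \<nu>"
  define K where "K = (\<Sum>m\<in>F. \<Sum>i<\<nu>. \<bar>m i\<bar>)"
  have "m i \<in> {-K..K}" if "m \<in> F" "i < \<nu>" for m i
  proof -
    have "\<bar>m i\<bar> \<le> (\<Sum>i<\<nu>. \<bar>m i\<bar>)" using that by (intro member_le_sum) auto
    also have "\<dots> \<le> K" unfolding K_def using F that by (intro member_le_sum sum_nonneg) auto
    finally show ?thesis by (simp add: abs_le_iff)
  qed
  with F have box: "F \<subseteq> lattice_box \<nu> K" by (auto simp: lattice_box_def)
  have "(\<Sum>m\<in>F. ennreal (\<Prod>i<\<nu>. h (m i))) = ennreal (\<Sum>m\<in>F. \<Prod>i<\<nu>. h (m i))"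
    using h by (intro sum_ennreal) (auto intro: prod_nonneg)
  also have "\<dots> \<le> ennreal (T ^ \<nu>)"
  proof (intro ennreal_leI)
    have "(\<Sum>m\<in>F. \<Prod>i<\<nu>. h (m i)) \<le> (\<Sum>m\<in>lattice_box \<nu> K. \<Prod>i<\<nu>. h (m i))"
      using box finite_lattice_box h by (intro sum_mono2) (auto intro: prod_nonneg)
    also have "\<dots> = (\<Sum>k\<in>{-K..K}. h k) ^ \<nu>" by (rule sum_lattice_box_prod)
    also have "\<dots> \<le> T ^ \<nu>" using h T by (intro power_mono sum_nonneg) auto
    finally show "(\<Sum>m\<in>F. \<Prod>i<\<nu>. h (m i)) \<le> T ^ \<nu>" .
  qed
  finally show "(\<Sum>m\<in>F. ennreal (\<Prod>i<\<nu>. h (m i))) \<le> ennreal (T ^ \<nu>)" .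
qed (rule nonneg_summable_on_complete, simp)

lemma sum_int_powr_le:
  fixes p :: real
  assumes p: "1 < p"
  shows "(\<Sum>k\<in>{-K..K}. (1 + real_of_int \<bar>k\<bar>) powr -p) \<le> 2 * (\<Sum>j. (1 + real j) powr -p)"
proof -
  let ?h = "\<lambda>k. (1 + real_of_int \<bar>k\<bar>) powr -p"
  define A where "A = int ` {..nat K}"
  have summable: "summable (\<lambda>j. (1 + real j) powr -p)"
    using summable_Suc_iff[of "\<lambda>j. real j powr -p"] summable_real_powr_iff[of "-p"] p
    by (simp add: add.commute)
  have "{-K..K} \<subseteq> A \<union> uminus ` A"
  proof
    fix k assume "k \<in> {-K..K}"
    then have "k = int (nat k) \<and> nat k \<le> nat K \<or> -k = int (nat (-k)) \<and> nat (-k) \<le> nat K"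
      by auto
    then show "k \<in> A \<union> uminus ` A"
      unfolding A_def by (metis UnI1 UnI2 atMost_iff image_eqI minus_minus)
  qed
  then have "(\<Sum>k\<in>{-K..K}. ?h k) \<le> (\<Sum>k\<in>A \<union> uminus ` A. ?h k)"
    by (intro sum_mono2) (auto simp: A_def)
  also have "\<dots> \<le> (\<Sum>k\<in>A. ?h k) + (\<Sum>k\<in>uminus ` A. ?h k)"
    by (subst sum_Un) (auto simp: A_def intro!: sum_nonneg)
  also have "(\<Sum>k\<in>uminus ` A. ?h k) = (\<Sum>k\<in>A. ?h k)"
    by (simp add: sum.reindex)
  also have "(\<Sum>k\<in>A. ?h k) = (\<Sum>j\<le>nat K. (1 + real j) powr -p)"
    by (simp add: A_def sum.reindex)
  also have "\<dots> \<le> (\<Sum>j. (1 + real j) powr -p)"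
    using summable by (intro sum_le_suminf) auto
  finally show ?thesis by simp
qed

lemma inverse_pow_mnorm_le_prod:
  assumes \<nu>: "1 \<le> \<nu>"
  shows "1 / (1 + mnorm \<nu> m) ^ (\<nu> + 1)
    \<le> (\<Prod>i<\<nu>. (1 + real_of_int \<bar>m i\<bar>) powr -(real (\<nu> + 1) / real \<nu>))"
proof -
  define M where "M = 1 + mnorm \<nu> m"
  have M: "1 \<le> M" using mnorm_nonneg[of \<nu> m] by (simp add: M_def)
  have "M powr real (\<nu> + 1) = M ^ (\<nu> + 1)"
    using M by (subst powr_realpow) auto
  then have "1 / M ^ (\<nu> + 1) = M powr -real (\<nu> + 1)"
    by (simp only: powr_minus inverse_eq_divide)
  also have "\<dots> = (M powr -(real (\<nu> + 1) / real \<nu>)) ^ \<nu>"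
    using M \<nu> by (simp add: powr_powr flip: powr_realpow)
  also have "\<dots> = (\<Prod>i<\<nu>. M powr -(real (\<nu> + 1) / real \<nu>))" by simp
  also have "\<dots> \<le> (\<Prod>i<\<nu>. (1 + real_of_int \<bar>m i\<bar>) powr -(real (\<nu> + 1) / real \<nu>))"
    using abs_le_mnorm[of _ \<nu> m] \<nu> by (intro prod_mono conjI powr_mono2') (auto simp: M_def)
  finally show ?thesis unfolding M_def .
qed

lemma infsum_inverse_pow_mnorm_lt_top:
  assumes \<nu>: "1 \<le> \<nu>"
  shows "(\<Sum>\<^sub>\<infinity>m\<in>lattice \<nu>. ennreal (1 / (1 + mnorm \<nu> m) ^ (\<nu> + 1))) < \<infinity>"
proof -
  define p where "p = real (\<nu> + 1) / real \<nu>"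
  have p: "1 < p" using \<nu> by (simp add: p_def field_simps)
  have "ennreal (1 / (1 + mnorm \<nu> m) ^ (\<nu> + 1))
      \<le> ennreal (\<Prod>i<\<nu>. (1 + real_of_int \<bar>m i\<bar>) powr -p)" for m
    unfolding p_def by (intro ennreal_leI inverse_pow_mnorm_le_prod[OF \<nu>])
  then have "(\<Sum>\<^sub>\<infinity>m\<in>lattice \<nu>. ennreal (1 / (1 + mnorm \<nu> m) ^ (\<nu> + 1)))
      \<le> (\<Sum>\<^sub>\<infinity>m\<in>lattice \<nu>. ennreal (\<Prod>i<\<nu>. (1 + real_of_int \<bar>m i\<bar>) powr -p))"
    by (intro infsum_mono nonneg_summable_on_complete) simp_all
  also have "\<dots> \<le> ennreal ((2 * (\<Sum>j. (1 + real j) powr -p)) ^ \<nu>)"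
    using p by (intro infsum_lattice_prod_le sum_int_powr_le) simp_all
  also have "\<dots> < \<infinity>" by simp
  finally show ?thesis .
qed

lemma bij_betw_diff_lattice:
  assumes "n \<in> lattice \<nu>"
  shows "bij_betw (\<lambda>m i. n i - m i) (lattice \<nu>) (lattice \<nu>)"
  by (rule bij_betw_byWitness[where f' = "\<lambda>m i. n i - m i"]) (use assms in \<open>auto simp: lattice_def\<close>)

lemma one_le_Dconst: "1 \<le> Dconst \<nu> x"
proof -
  let ?f = "\<lambda>m. ennreal (wt \<nu> x (1/4) (\<lambda>i. 0) / (wt \<nu> x (1/4) m * wt \<nu> x (1/4) (\<lambda>i. 0 - m i)))"
  have zero: "(\<lambda>i. 0) \<in> lattice \<nu>" by (simp add: lattice_def)
  have "1 = (\<Sum>\<^sub>\<infinity>m\<in>{\<lambda>i. 0}. ?f m)" by simp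
  also have "\<dots> \<le> (\<Sum>\<^sub>\<infinity>m\<in>lattice \<nu>. ?f m)"
    using zero by (intro infsum_mono_neutral nonneg_summable_on_complete) auto
  also have "\<dots> \<le> Dconst \<nu> x"
    unfolding Dconst_def by (intro SUP_upper2[OF zero] SUP_upper2[of "1/4"]) simp_all
  finally show ?thesis .
qed

lemma infsum_lattice_le_reflected:
  fixes f q :: "(nat \<Rightarrow> int) \<Rightarrow> real"
  assumes n: "n \<in> lattice \<nu>" and C: "0 \<le> C" and q: "\<And>m. 0 \<le> q m"
    and f: "\<And>m. f m \<le> C * (q m + q (\<lambda>i. n i - m i))"
  shows "(\<Sum>\<^sub>\<infinity>m\<in>lattice \<nu>. ennreal (f m)) \<le> ennreal C * (2 * (\<Sum>\<^sub>\<infinity>m\<in>lattice \<nu>. ennreal (q m)))"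
proof -
  have "(\<Sum>\<^sub>\<infinity>m\<in>lattice \<nu>. ennreal (f m))
      \<le> (\<Sum>\<^sub>\<infinity>m\<in>lattice \<nu>. ennreal C * (ennreal (q m) + ennreal (q (\<lambda>i. n i - m i))))"
    using f C q by (intro infsum_mono nonneg_summable_on_complete)
      (simp_all add: ennreal_leI flip: ennreal_mult ennreal_plus)
  also have "\<dots> \<le> ennreal C * (\<Sum>\<^sub>\<infinity>m\<in>lattice \<nu>. ennreal (q m) + ennreal (q (\<lambda>i. n i - m i)))"
    by (rule infsum_cmult_right_le_ennreal)
  also have "(\<Sum>\<^sub>\<infinity>m\<in>lattice \<nu>. ennreal (q m) + ennreal (q (\<lambda>i. n i - m i)))
      = (\<Sum>\<^sub>\<infinity>m\<in>lattice \<nu>. ennreal (q m)) + (\<Sum>\<^sub>\<infinity>m\<in>lattice \<nu>. ennreal (q (\<lambda>i. n i - m i)))"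
    by (rule infsum_add) (auto intro: nonneg_summable_on_complete)
  also have "(\<Sum>\<^sub>\<infinity>m\<in>lattice \<nu>. ennreal (q (\<lambda>i. n i - m i))) = (\<Sum>\<^sub>\<infinity>m\<in>lattice \<nu>. ennreal (q m))"
    by (rule infsum_reindex_bij_betw[OF bij_betw_diff_lattice[OF n]])
  finally show ?thesis by (simp add: mult_2)
qed

lemma Dconst_lt_top:
  assumes \<nu>: "1 \<le> \<nu>" and x: "0 < x" "x \<le> 1"
  shows "Dconst \<nu> x < \<infinity>"
proof -
  let ?q = "\<lambda>m. 1 / (1 + mnorm \<nu> m) ^ (\<nu> + 1)"
  define S where "S = (\<Sum>\<^sub>\<infinity>m\<in>lattice \<nu>. ennreal (?q m))"
  obtain C where C: "0 \<le> C" and ratio: "\<And>\<sigma> n m. 1/4 \<le> \<sigma> \<Longrightarrow>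
      wt \<nu> x \<sigma> n / (wt \<nu> x \<sigma> m * wt \<nu> x \<sigma> (\<lambda>i. n i - m i))
      \<le> C / (1 + min (mnorm \<nu> m) (mnorm \<nu> (\<lambda>i. n i - m i))) ^ (\<nu> + 1)"
    using wt_ratio_le[OF x] by blast
  have "wt \<nu> x \<sigma> n / (wt \<nu> x \<sigma> m * wt \<nu> x \<sigma> (\<lambda>i. n i - m i)) \<le> C * (?q m + ?q (\<lambda>i. n i - m i))"
    if "1/4 \<le> \<sigma>" for \<sigma> n m
  proof -
    have "wt \<nu> x \<sigma> n / (wt \<nu> x \<sigma> m * wt \<nu> x \<sigma> (\<lambda>i. n i - m i))
        \<le> C * (1 / (1 + min (mnorm \<nu> m) (mnorm \<nu> (\<lambda>i. n i - m i))) ^ (\<nu> + 1))"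
      using ratio[OF that] by simp
    also have "\<dots> \<le> C * (?q m + ?q (\<lambda>i. n i - m i))"
      using C by (intro mult_left_mono inverse_pow_min_le mnorm_nonneg)
    finally show ?thesis .
  qed
  then have "Dconst \<nu> x \<le> ennreal C * (2 * S)"
    unfolding Dconst_def S_def using C
    by (intro SUP_least infsum_lattice_le_reflected) (auto simp: mnorm_nonneg)
  also have "\<dots> < \<infinity>"
    using infsum_inverse_pow_mnorm_lt_top[OF \<nu>] by (simp add: S_def ennreal_mult_less_top)
  finally show ?thesis .
qed

theorem proposition17:
  fixes \<nu> :: nat and x :: real
  assumes "\<nu> \<ge> 1" and "0 < x" and "x \<le> 1"
  shows "1 \<le> Dconst \<nu> x \<and> Dconst \<nu> x < \<infinity>"
  using one_le_Dconst Dconst_lt_top[OF assms] by blast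

end
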